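(* Assume $f$ has a unique global maximizer, contains no weak epistasis, and every order-1 epistasis of $f$ is strict. Then the epistatic graph contains no chordless directed cycle of size greater than $2$.
   Context: Fix $\ell\ge1$, loci $V=\{0,\dots,\ell-1\}$, chromosomes $\vec y\in\{0,1\}^V$, fitness $f:\{0,1\}^V\to\mathbb R$ (maximized) with unique global maximizer $g$. An assignment $A$ is a set of pairs $(v,a)$ with at most one pair per locus; coverage $\mathcal C(A)$; $A[v]$ its allele at $v$. $\Psi_A$ is the set of chromosomes agreeing with $A$ on $\mathcal C(A)$ with maximum fitness among such chromosomes; $\Psi_A[v]=\{\psi_v:\psi\in\Psi_A\}$. Epistasis: for $v\in V$ and nonempty $S\subseteq V\setminus\{v\}$, $S\Rightarrow v$ iff for every $s\in S$ there exists an assignment $A$ with $\mathcal C(A)=S$ and $\Psi_A[v]\neq\Psi_{A\setminus\{(s,A[s])\}}[v]$. An epistasis $S\Rightarrow v$ with $|S|\ge2$ is weak if no nonempty proper subset $T\subsetneq S$ has $T\Rightarrow v$. An order-1 epistasis $\{u\}\Rightarrow v$ is strict, written $u\rightarrow v$, if $\Psi_{\{(u,1-g[u])\}}[v]=\{1-g[v]\}$. The epistatic graph (EG) is the directed graph on $V$ with edge $u\to v$ iff $\{u\}\Rightarrow v$ (under the assumption, iff $u\rightarrow v$). A directed cycle $v_0\rightarrow v_1\rightarrow\cdots\rightarrow v_{c-1}\rightarrow v_0$ of size $c$ (indices mod $c$) is chordless if there are no $i$ and $j\neq i+1 \pmod c$ with $v_i\rightarrow v_j$ (so e.g. in $a\to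 b\to c\to a$, an edge $b\to a$ counts as a chord). *)

theory Defs
  imports Complex_Main
begin

text \<open>Loci are {0..<l}. A chromosome is a function nat => bool that is False outside
  the loci (allele 1 = True, allele 0 = False). A fitness is a real-valued function on
  chromosomes (only its values on chromosomes matter). An assignment is a partial map
  nat => bool option; its coverage is its domain.\<close>

definition chroms :: "nat \<Rightarrow> (nat \<Rightarrow> bool) set" where
  "chroms l = {y. \<forall>i. l \<le> i \<longrightarrow> \<not> y i}"

definition agrees :: "(nat \<Rightarrow> bool option) \<Rightarrow> (nat \<Rightarrow> bool) \<Rightarrow> bool" where
  "agrees A y \<longleftrightarrow> (\<forall>v\<in>dom A. A v = Some (y v))"

definition Psi :: "nat \<Rightarrow> ((nat \<Rightarrow> bool) \<Rightarrow> real) \<Rightarrow> (nat \<Rightarrow> bool option) \<Rightarrow> (nat \<Rightarrow> bool) set" where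
  "Psi l f A = {y \<in> chroms l. agrees A y \<and> (\<forall>z\<in>chroms l. agrees A z \<longrightarrow> f z \<le> f y)}"

definition PsiAt :: "nat \<Rightarrow> ((nat \<Rightarrow> bool) \<Rightarrow> real) \<Rightarrow> (nat \<Rightarrow> bool option) \<Rightarrow> nat \<Rightarrow> bool set" where
  "PsiAt l f A v = (\<lambda>y. y v) ` Psi l f A"

definition epistasis :: "nat \<Rightarrow> ((nat \<Rightarrow> bool) \<Rightarrow> real) \<Rightarrow> nat set \<Rightarrow> nat \<Rightarrow> bool" where
  "epistasis l f S v \<longleftrightarrow> v < l \<and> S \<noteq> {} \<and> S \<subseteq> {..<l} - {v} \<and>
     (\<forall>s\<in>S. \<exists>A. dom A = S \<and> PsiAt l f A v \<noteq> PsiAt l f (A(s := None)) v)"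

definition is_global_max :: "nat \<Rightarrow> ((nat \<Rightarrow> bool) \<Rightarrow> real) \<Rightarrow> (nat \<Rightarrow> bool) \<Rightarrow> bool" where
  "is_global_max l f g \<longleftrightarrow> g \<in> chroms l \<and> (\<forall>z\<in>chroms l. f z \<le> f g)"

definition unique_global_max :: "nat \<Rightarrow> ((nat \<Rightarrow> bool) \<Rightarrow> real) \<Rightarrow> bool" where
  "unique_global_max l f \<longleftrightarrow> (\<exists>!g. is_global_max l f g)"

definition gmax :: "nat \<Rightarrow> ((nat \<Rightarrow> bool) \<Rightarrow> real) \<Rightarrow> (nat \<Rightarrow> bool)" where
  "gmax l f = (THE g. is_global_max l f g)"

definition weak_epistasis :: "nat \<Rightarrow> ((nat \<Rightarrow> bool) \<Rightarrow> real) \<Rightarrow> nat set \<Rightarrow> nat \<Rightarrow> bool" where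
  "weak_epistasis l f S v \<longleftrightarrow> epistasis l f S v \<and> 2 \<le> card S \<and>
     \<not> (\<exists>T. T \<noteq> {} \<and> T \<subset> S \<and> epistasis l f T v)"

definition strict_epistasis :: "nat \<Rightarrow> ((nat \<Rightarrow> bool) \<Rightarrow> real) \<Rightarrow> nat \<Rightarrow> nat \<Rightarrow> bool" where
  "strict_epistasis l f u v \<longleftrightarrow> epistasis l f {u} v \<and>
     PsiAt l f [u \<mapsto> \<not> gmax l f u] v = {\<not> gmax l f v}"

definition eg_edge :: "nat \<Rightarrow> ((nat \<Rightarrow> bool) \<Rightarrow> real) \<Rightarrow> nat \<Rightarrow> nat \<Rightarrow> bool" where
  "eg_edge l f u v \<longleftrightarrow> epistasis l f {u} v"

definition chordless_cycle :: "nat \<Rightarrow> ((nat \<Rightarrow> bool) \<Rightarrow> real) \<Rightarrow> nat list \<Rightarrow> bool" where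
  "chordless_cycle l f cs \<longleftrightarrow> cs \<noteq> [] \<and> distinct cs \<and> set cs \<subseteq> {..<l} \<and>
     (\<forall>i<length cs. eg_edge l f (cs ! i) (cs ! ((i + 1) mod length cs))) \<and>
     (\<forall>i<length cs. \<forall>j<length cs. j \<noteq> (i + 1) mod length cs \<longrightarrow>
        \<not> eg_edge l f (cs ! i) (cs ! j))"

end

theory Submission
  imports Defs
begin

text \<open>Let \<open>v_0 \<rightarrow> \<dots> \<rightarrow> v_{c-1} \<rightarrow> v_0\<close> be a chordless cycle with \<open>c > 2\<close>, let \<open>A_i\<close> flip
  \<open>v_i\<close> away from the global maximizer \<open>g\<close>, and pick \<open>y_i \<in> \<Psi>_{A_i}\<close>. Strictness of
  \<open>v_i \<rightarrow> v_{i+1}\<close> forces \<open>y_i\<close> to agree with \<open>A_{i+1}\<close>, so \<open>f y_i \<le> f y_{i+1}\<close>. As there is no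
  chord \<open>v_i \<rightarrow> v_{i+2}\<close>, flipping \<open>v_i\<close> leaves the optimal allele at \<open>v_{i+2}\<close> equal to \<open>g\<close>,
  whereas strictness of \<open>v_{i+1} \<rightarrow> v_{i+2}\<close> flips it in every element of \<open>\<Psi>_{A_{i+1}}\<close>; so
  \<open>y_i \<notin> \<Psi>_{A_{i+1}}\<close> and the inequality is strict. Going once around the cycle gives
  \<open>f y_0 < f y_0\<close>.\<close>

definition flip_assignment :: "(nat \<Rightarrow> bool) \<Rightarrow> nat \<Rightarrow> (nat \<Rightarrow> bool option)" where
  "flip_assignment g u = [u \<mapsto> \<not> g u]"

lemma Psi_empty:
  assumes "unique_global_max l f"
  shows "Psi l f Map.empty = {gmax l f}"
proof -
  have "Psi l f Map.empty = {g. is_global_max l f g}"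
    unfolding Psi_def agrees_def is_global_max_def by simp
  also have "\<dots> = {gmax l f}"
    using assms theI'[of "is_global_max l f"]
    unfolding unique_global_max_def gmax_def by blast
  finally show ?thesis .
qed

lemma PsiAt_empty:
  assumes "unique_global_max l f"
  shows "PsiAt l f Map.empty v = {gmax l f v}"
  unfolding PsiAt_def Psi_empty[OF assms] by simp

lemma PsiAt_upd_eq_empty_if_not_epistasis:
  assumes "u < l" and "v < l" and "u \<noteq> v" and "\<not> epistasis l f {u} v"
  shows "PsiAt l f [u \<mapsto> a] v = PsiAt l f Map.empty v"
proof -
  have "\<forall>A. dom A = {u} \<longrightarrow> PsiAt l f A v = PsiAt l f (A(u := None)) v"
    using assms unfolding epistasis_def by auto
  from this[rule_format, of "[u \<mapsto> a]"] show ?thesis by simp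
qed

lemma Psi_less_if_agrees:
  assumes "y \<in> Psi l f A" and "z \<in> Psi l f B" and "agrees B y"
    and "y w \<notin> PsiAt l f B w"
  shows "f y < f z"
proof -
  have "f y \<le> f z" using assms(1-3) unfolding Psi_def by blast
  moreover have "y \<notin> Psi l f B" using assms(4) unfolding PsiAt_def by blast
  ultimately show ?thesis using assms(1-3) unfolding Psi_def by fastforce
qed

lemma Psi_less_after_flip:
  assumes "y \<in> Psi l f A" and "z \<in> Psi l f (flip_assignment g v)"
    and "PsiAt l f A v = {\<not> g v}" and "PsiAt l f A w = {g w}"
    and "PsiAt l f (flip_assignment g v) w = {\<not> g w}"
  shows "f y < f z"
proof (rule Psi_less_if_agrees[OF assms(1,2)])
  have "y v \<in> PsiAt l f A v" and "y w \<in> PsiAt l f A w"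
    using assms(1) unfolding PsiAt_def by auto
  then show "agrees (flip_assignment g v) y" and "y w \<notin> PsiAt l f (flip_assignment g v) w"
    using assms(3-5) unfolding agrees_def flip_assignment_def by auto
qed

lemma no_strictly_increasing_cycle:
  fixes M :: "nat \<Rightarrow> 'a::order"
  assumes "0 < c"
  shows "\<not> (\<forall>i<c. M i < M ((i + 1) mod c))"
proof
  assume incr: "\<forall>i<c. M i < M ((i + 1) mod c)"
  have up: "M 0 \<le> M k" if "k < c" for k
    using that
  proof (induction k)
    case (Suc k)
    then have "M k < M (Suc k)" using incr[rule_format, of k] by simp
    with Suc show ?case by (simp add: less_imp_le order_trans)
  qed simp
  have "M 0 \<le> M (c - 1)" using up assms by simp
  also have "M (c - 1) < M 0" using incr[rule_format, of "c - 1"] assms by simp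
  finally show False by simp
qed

lemma mod_add_two_neq:
  fixes i c :: nat
  assumes "2 < c" and "i < c"
  shows "(i + 2) mod c \<noteq> (i + 1) mod c" and "(i + 2) mod c \<noteq> i"
proof -
  show "(i + 2) mod c \<noteq> (i + 1) mod c"
  proof
    assume "(i + 2) mod c = (i + 1) mod c"
    then have "c dvd 1" using mod_eq_dvd_iff_nat[of "i + 1" "i + 2" c] by simp
    with assms(1) show False by simp
  qed
  show "(i + 2) mod c \<noteq> i"
  proof
    assume "(i + 2) mod c = i"
    then have "c dvd 2" using mod_eq_dvd_iff_nat[of i "i + 2" c] assms(2) by simp
    with assms(1) show False using dvd_imp_le by fastforce
  qed
qed

lemma chordless_cycle_edge:
  assumes "chordless_cycle l f cs" and "i < length cs"
  shows "epistasis l f {cs ! i} (cs ! ((i + 1) mod length cs))"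
  using assms unfolding chordless_cycle_def eg_edge_def by blast

lemma PsiAt_flip_chordless_cycle_skip:
  assumes "unique_global_max l f" and "chordless_cycle l f cs" and "2 < length cs"
    and "i < length cs"
  shows "PsiAt l f (flip_assignment g (cs ! i)) (cs ! ((i + 2) mod length cs))
    = {gmax l f (cs ! ((i + 2) mod length cs))}"
proof -
  let ?j = "(i + 2) mod length cs"
  have j: "?j < length cs" using assms(3) by (intro mod_less_divisor) linarith
  have loci: "cs ! i < l" "cs ! ?j < l"
    using assms(2) nth_mem[OF assms(4)] nth_mem[OF j] unfolding chordless_cycle_def by blast+
  have distinct: "cs ! i \<noteq> cs ! ?j"
    using assms(2,4) j mod_add_two_neq(2)[OF assms(3,4)]
    unfolding chordless_cycle_def by (auto simp: nth_eq_iff_index_eq)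
  have no_chord: "\<not> epistasis l f {cs ! i} (cs ! ?j)"
    using assms(2,4) j mod_add_two_neq(1)[OF assms(3,4)]
    unfolding chordless_cycle_def eg_edge_def by blast
  show ?thesis
    using PsiAt_upd_eq_empty_if_not_epistasis[OF loci distinct no_chord] PsiAt_empty[OF assms(1)]
    unfolding flip_assignment_def by simp
qed

theorem lemma6:
  fixes l :: nat and f :: "(nat \<Rightarrow> bool) \<Rightarrow> real"
  assumes "1 \<le> l"
    and "unique_global_max l f"
    and "\<And>S v. \<not> weak_epistasis l f S v"
    and "\<And>u v. epistasis l f {u} v \<Longrightarrow> strict_epistasis l f u v"
  shows "\<not> (\<exists>cs. chordless_cycle l f cs \<and> 2 < length cs)"
proof
  assume "\<exists>cs. chordless_cycle l f cs \<and> 2 < length cs"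
  then obtain cs where cyc: "chordless_cycle l f cs" and long: "2 < length cs" by blast
  define c g where "c = length cs" and "g = gmax l f"
  define A where "A i = flip_assignment g (cs ! i)" for i
  have strict: "PsiAt l f (A i) (cs ! ((i + 1) mod c)) = {\<not> g (cs ! ((i + 1) mod c))}"
    if "i < c" for i
    using assms(4)[OF chordless_cycle_edge[OF cyc]] that
    unfolding strict_epistasis_def A_def flip_assignment_def g_def c_def by simp
  have skip: "PsiAt l f (A i) (cs ! ((i + 2) mod c)) = {g (cs ! ((i + 2) mod c))}"
    if "i < c" for i
    using PsiAt_flip_chordless_cycle_skip[OF assms(2) cyc long] that
    unfolding A_def g_def c_def by simp
  have "\<forall>i<c. \<exists>y. y \<in> Psi l f (A i)"
    using strict unfolding PsiAt_def by blast
  then obtain y where y: "\<And>i. i < c \<Longrightarrow> y i \<in> Psi l f (A i)" by metis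
  have "f (y i) < f (y ((i + 1) mod c))" if "i < c" for i
  proof (rule Psi_less_after_flip[OF y[OF that]])
    let ?j = "(i + 1) mod c"
    have j: "?j < c" using that by simp
    have "(?j + 1) mod c = (i + 2) mod c" by (simp add: mod_Suc_eq)
    then show "y ?j \<in> Psi l f (flip_assignment g (cs ! ?j))"
      and "PsiAt l f (flip_assignment g (cs ! ?j)) (cs ! ((i + 2) mod c))
        = {\<not> g (cs ! ((i + 2) mod c))}"
      using y[OF j] strict[OF j] unfolding A_def by auto
  qed (use strict skip that in auto)
  moreover have "0 < c" using long c_def by linarith
  ultimately show False using no_strictly_increasing_cycle[of c "\<lambda>i. f (y i)"] by blast
qed

end
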